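(* Let $G$ be a graph with maximum degree $\Delta$. Then $\chi_{ei}(G)\le \Delta(\Delta-1)^2+1$. This bound is attained (with equality) by every odd cycle $C_n$ with $n\ge 5$.
   Context: All graphs are finite and simple. A path $P_4$ in $G$ is a sequence $uxyv$ of four distinct vertices with $ux,xy,yv\in E(G)$; $u,v$ are its end vertices. An $e$-injective $k$-coloring of $G$ is a function $f:V(G)\to\{1,\dots,k\}$ with $f(u)\ne f(v)$ whenever $u,v$ are the end vertices of some path $P_4$ in $G$; $\chi_{ei}(G)$ is the least such $k$. $C_n$ is the cycle on $n$ vertices. *)

theory Defs
  imports Main
begin

definition simple_graph :: "'a set \<Rightarrow> ('a \<Rightarrow> 'a \<Rightarrow> bool) \<Rightarrow> bool" where
  "simple_graph V E \<longleftrightarrow> finite V \<and>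
     (\<forall>u v. E u v \<longrightarrow> u \<in> V \<and> v \<in> V \<and> u \<noteq> v \<and> E v u)"

definition P4_ends :: "('a \<Rightarrow> 'a \<Rightarrow> bool) \<Rightarrow> 'a \<Rightarrow> 'a \<Rightarrow> bool" where
  "P4_ends E u v \<longleftrightarrow> (\<exists>x y. distinct [u, x, y, v] \<and> E u x \<and> E x y \<and> E y v)"

definition ei_coloring :: "'a set \<Rightarrow> ('a \<Rightarrow> 'a \<Rightarrow> bool) \<Rightarrow> nat \<Rightarrow> ('a \<Rightarrow> nat) \<Rightarrow> bool" where
  "ei_coloring V E k f \<longleftrightarrow> (\<forall>v\<in>V. f v \<in> {1..k}) \<and>
     (\<forall>u v. P4_ends E u v \<longrightarrow> f u \<noteq> f v)"

definition chi_ei :: "'a set \<Rightarrow> ('a \<Rightarrow> 'a \<Rightarrow> bool) \<Rightarrow> nat" where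
  "chi_ei V E = (LEAST k. \<exists>f. ei_coloring V E k f)"

definition degree :: "'a set \<Rightarrow> ('a \<Rightarrow> 'a \<Rightarrow> bool) \<Rightarrow> 'a \<Rightarrow> nat" where
  "degree V E v = card {u \<in> V. E v u}"

definition max_degree :: "'a set \<Rightarrow> ('a \<Rightarrow> 'a \<Rightarrow> bool) \<Rightarrow> nat" where
  "max_degree V E = Max (insert 0 (degree V E ` V))"

definition cycle_adj :: "nat \<Rightarrow> nat \<Rightarrow> nat \<Rightarrow> bool" where
  "cycle_adj n i j \<longleftrightarrow> i < n \<and> j < n \<and> (j = (i + 1) mod n \<or> i = (j + 1) mod n)"

end

theory Submission
  imports Defs
begin

(* For a fixed end u, a path u x y v is determined by a neighbour x of u, a neighbour y \<noteq> u of x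
   and a neighbour v \<noteq> x of y, so at most \<Delta>(\<Delta>-1)^2 vertices are P4-ends of u. Greedily colouring
   the graph "v is a P4-end of u" therefore needs at most \<Delta>(\<Delta>-1)^2 + 1 colours.
   For an odd cycle C_n with n \<ge> 5 we have \<Delta> = 2, and i, i+3 (mod n) are always the ends of a P4.
   With only two colours the colour would alternate along 0, 3, 6, ... (mod n), which returns to 0
   after the odd number n of steps: a contradiction, so three colours are needed. *)

lemma card_UN_le_card_mult:
  assumes "finite A" and "\<And>x. x \<in> A \<Longrightarrow> card (B x) \<le> m"
  shows "card (\<Union>x\<in>A. B x) \<le> card A * m"
proof -
  have "card (\<Union>x\<in>A. B x) \<le> (\<Sum>x\<in>A. card (B x))"
    using assms(1) by (rule card_UN_le)
  also have "\<dots> \<le> card A * m"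
    using sum_bounded_above[of A "\<lambda>x. card (B x)" m] assms(2) by simp
  finally show ?thesis .
qed

lemma greedy_coloring:
  assumes "finite V"
    and sym: "\<And>u v. R u v \<Longrightarrow> R v u" and irrefl: "\<And>u. \<not> R u u"
    and "\<And>u. u \<in> V \<Longrightarrow> card {v \<in> V. R u v} \<le> d"
  shows "\<exists>f. (\<forall>v\<in>V. f v \<in> {1..d+1}) \<and> (\<forall>u\<in>V. \<forall>v\<in>V. R u v \<longrightarrow> f u \<noteq> f v)"
  using assms(1,4)
proof (induction V rule: finite_induct)
  case empty
  show ?case by simp
next
  case (insert x S)
  have "card {v \<in> S. R u v} \<le> d" if "u \<in> S" for u
  proof -
    have "card {v \<in> S. R u v} \<le> card {v \<in> insert x S. R u v}"
      using insert.hyps(1) by (intro card_mono) auto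
    then show ?thesis using insert.prems[of u] that by simp
  qed
  then obtain f where f_range: "\<forall>v\<in>S. f v \<in> {1..d+1}"
    and f_proper: "\<forall>u\<in>S. \<forall>v\<in>S. R u v \<longrightarrow> f u \<noteq> f v"
    using insert.IH by blast
  let ?used = "f ` {v \<in> S. R x v}"
  have "card ?used \<le> card {v \<in> S. R x v}"
    by (rule card_image_le) (use insert.hyps(1) in simp)
  also have "\<dots> \<le> card {v \<in> insert x S. R x v}"
    using insert.hyps(1) by (intro card_mono) auto
  also have "\<dots> \<le> d"
    using insert.prems by simp
  finally have "card ?used < card {1..d+1}" by simp
  then have "\<not> {1..d+1} \<subseteq> ?used"
    using card_mono[of ?used "{1..d+1}"] insert.hyps(1) by auto
  then obtain c where c: "c \<in> {1..d+1}" "c \<notin> ?used" by blast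
  have "\<forall>u\<in>insert x S. \<forall>v\<in>insert x S. R u v \<longrightarrow> (f(x := c)) u \<noteq> (f(x := c)) v"
    using f_proper c(2) insert.hyps(2) irrefl sym by auto
  moreover have "\<forall>v\<in>insert x S. (f(x := c)) v \<in> {1..d+1}"
    using f_range c(1) by simp
  ultimately show ?case by blast
qed

lemma card_neighbours_le_max_degree:
  assumes "finite V" "v \<in> V"
  shows "card {u \<in> V. E v u} \<le> max_degree V E"
  unfolding max_degree_def using assms by (intro Max_ge) (auto simp: degree_def)

lemma max_degree_regular:
  assumes "V \<noteq> {}" and "\<And>v. v \<in> V \<Longrightarrow> degree V E v = d"
  shows "max_degree V E = d"
proof -
  have "degree V E ` V = {d}" using assms by auto
  then show ?thesis by (simp add: max_degree_def)
qed

lemma P4_ends_irrefl: "\<not> P4_ends E u u"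
  unfolding P4_ends_def by simp

lemma P4_ends_sym:
  assumes "simple_graph V E" "P4_ends E u v"
  shows "P4_ends E v u"
proof -
  obtain x y where "distinct [u, x, y, v]" "E u x" "E x y" "E y v"
    using assms(2) unfolding P4_ends_def by blast
  then have "distinct [v, y, x, u]" "E v y" "E y x" "E x u"
    using assms(1) unfolding simple_graph_def by auto
  then show ?thesis unfolding P4_ends_def by blast
qed

lemma P4_ends_in_vertices:
  assumes "simple_graph V E" "P4_ends E u v"
  shows "u \<in> V" "v \<in> V"
  using assms unfolding simple_graph_def P4_ends_def by blast+

lemma card_P4_ends_le:
  assumes G: "simple_graph V E" and "u \<in> V"
  shows "card {v \<in> V. P4_ends E u v} \<le> max_degree V E * (max_degree V E - 1)^2"
proof -
  define \<Delta> where "\<Delta> = max_degree V E"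
  define N where "N w = {z \<in> V. E w z}" for w
  have fin: "finite V" and adj: "\<And>a b. E a b \<Longrightarrow> a \<in> V \<and> b \<in> V \<and> a \<noteq> b \<and> E b a"
    using G unfolding simple_graph_def by blast+
  have finite_N: "finite (N w)" for w
    unfolding N_def using fin by simp
  have card_N: "card (N w) \<le> \<Delta>" if "w \<in> V" for w
    unfolding N_def \<Delta>_def using card_neighbours_le_max_degree[OF fin that] .
  have card_N_minus: "card (N b - {a}) \<le> \<Delta> - 1" if "E a b" for a b
  proof -
    have "a \<in> N b" "b \<in> V" using adj[OF that] unfolding N_def by auto
    then show ?thesis using card_N[of b] finite_N by (simp add: card_Diff_singleton)
  qed
  have "{v \<in> V. P4_ends E u v} \<subseteq> (\<Union>x\<in>N u. \<Union>y\<in>N x - {u}. N y - {x})"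
    unfolding P4_ends_def N_def using adj by fastforce
  then have "card {v \<in> V. P4_ends E u v} \<le> card (\<Union>x\<in>N u. \<Union>y\<in>N x - {u}. N y - {x})"
    using finite_N by (intro card_mono) auto
  also have "\<dots> \<le> card (N u) * ((\<Delta> - 1) * (\<Delta> - 1))"
  proof (intro card_UN_le_card_mult finite_N)
    fix x assume "x \<in> N u"
    then have ux: "E u x" unfolding N_def by simp
    have "card (\<Union>y\<in>N x - {u}. N y - {x}) \<le> card (N x - {u}) * (\<Delta> - 1)"
      using finite_N card_N_minus unfolding N_def by (intro card_UN_le_card_mult) auto
    also have "\<dots> \<le> (\<Delta> - 1) * (\<Delta> - 1)"
      using card_N_minus[OF ux] by simp
    finally show "card (\<Union>y\<in>N x - {u}. N y - {x}) \<le> (\<Delta> - 1) * (\<Delta> - 1)" .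
  qed
  also have "\<dots> \<le> \<Delta> * (\<Delta> - 1)^2"
    using card_N[OF \<open>u \<in> V\<close>] by (simp add: power2_eq_square)
  finally show ?thesis unfolding \<Delta>_def .
qed

lemma ei_coloring_exists:
  assumes G: "simple_graph V E"
  shows "\<exists>f. ei_coloring V E (max_degree V E * (max_degree V E - 1)^2 + 1) f"
proof -
  let ?k = "max_degree V E * (max_degree V E - 1)^2"
  have "finite V" using G by (simp add: simple_graph_def)
  then have "\<exists>f. (\<forall>v\<in>V. f v \<in> {1..?k+1}) \<and> (\<forall>u\<in>V. \<forall>v\<in>V. P4_ends E u v \<longrightarrow> f u \<noteq> f v)"
    by (rule greedy_coloring[OF _ P4_ends_sym[OF G] P4_ends_irrefl card_P4_ends_le[OF G]])
  then obtain f where range: "\<forall>v\<in>V. f v \<in> {1..?k+1}"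
    and proper: "\<forall>u\<in>V. \<forall>v\<in>V. P4_ends E u v \<longrightarrow> f u \<noteq> f v"
    by blast
  have "f u \<noteq> f v" if "P4_ends E u v" for u v
    using proper P4_ends_in_vertices[OF G that] that by simp
  with range have "ei_coloring V E (?k + 1) f"
    unfolding ei_coloring_def by simp
  then show ?thesis by blast
qed

lemma chi_ei_le:
  assumes "ei_coloring V E k f"
  shows "chi_ei V E \<le> k"
  unfolding chi_ei_def using assms by (blast intro: Least_le)

lemma ei_coloring_chi_ei:
  assumes "ei_coloring V E k f"
  shows "\<exists>g. ei_coloring V E (chi_ei V E) g"
proof -
  have "\<exists>k f. ei_coloring V E k f" using assms by blast
  then show ?thesis unfolding chi_ei_def by (rule LeastI_ex)
qed

lemma mod_add_cancel_left:
  fixes i k l n :: nat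
  assumes "k < n" "l < n"
  shows "(i + k) mod n = (i + l) mod n \<longleftrightarrow> k = l"
proof -
  have "(i + k) mod n = (i + l) mod n \<longleftrightarrow> k mod n = l mod n"
    by (simp add: nat_mod_eq_iff)
  then show ?thesis using assms by simp
qed

lemma cycle_adj_Suc:
  assumes "i < n"
  shows "cycle_adj n i ((i + 1) mod n)"
  unfolding cycle_adj_def using assms by simp

lemma cycle_adj_iff:
  assumes "i < n" "u < n"
  shows "cycle_adj n i u \<longleftrightarrow> u = (i + 1) mod n \<or> u = (i + (n - 1)) mod n"
proof -
  have "((u + 1) mod n + (n - 1)) mod n = (u + n) mod n"
    using assms mod_add_left_eq[of "u + 1" n "n - 1"] by simp
  moreover have "((i + (n - 1)) mod n + 1) mod n = (i + n) mod n"
    using assms mod_add_left_eq[of "i + (n - 1)" n 1] by simp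
  ultimately have "((u + 1) mod n + (n - 1)) mod n = u" "((i + (n - 1)) mod n + 1) mod n = i"
    using assms by simp_all
  then have "i = (u + 1) mod n \<longleftrightarrow> u = (i + (n - 1)) mod n" by metis
  then show ?thesis unfolding cycle_adj_def using assms by blast
qed

lemma simple_graph_cycle:
  assumes "2 \<le> n"
  shows "simple_graph {0..<n} (cycle_adj n)"
proof -
  have "u \<noteq> (u + 1) mod n" "(u + 1) mod n \<noteq> u" if "u < n" for u
    using mod_add_cancel_left[of 0 n 1 u] that assms by simp_all
  then show ?thesis unfolding simple_graph_def cycle_adj_def by auto
qed

lemma degree_cycle:
  assumes "3 \<le> n" "i < n"
  shows "degree {0..<n} (cycle_adj n) i = 2"
proof -
  have "{u \<in> {0..<n}. cycle_adj n i u} = {(i + 1) mod n, (i + (n - 1)) mod n}"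
    using cycle_adj_iff[OF assms(2)] assms by auto
  moreover have "(i + 1) mod n \<noteq> (i + (n - 1)) mod n"
    using mod_add_cancel_left[of 1 n "n - 1" i] assms by simp
  ultimately show ?thesis unfolding degree_def by simp
qed

lemma max_degree_cycle:
  assumes "3 \<le> n"
  shows "max_degree {0..<n} (cycle_adj n) = 2"
  using assms by (intro max_degree_regular degree_cycle) auto

lemma P4_ends_cycle:
  assumes "4 \<le> n" "i < n"
  shows "P4_ends (cycle_adj n) i ((i + 3) mod n)"
proof -
  define p where "p k = (i + k) mod n" for k
  have p_eq_iff: "p k = p l \<longleftrightarrow> k = l" if "k < n" "l < n" for k l
    unfolding p_def using that by (rule mod_add_cancel_left)
  have step: "cycle_adj n (p k) (p (k + 1))" for k
    using cycle_adj_Suc[of "p k" n] assms(2) unfolding p_def by (simp add: mod_Suc_eq)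
  have "distinct [p 0, p 1, p 2, p 3]"
    using assms(1) by (simp add: p_eq_iff)
  moreover have "cycle_adj n (p 0) (p 1)" "cycle_adj n (p 1) (p 2)" "cycle_adj n (p 2) (p 3)"
    using step[of 0] step[of 1] step[of 2] by (simp_all add: numeral_2_eq_2 numeral_3_eq_3)
  ultimately have "P4_ends (cycle_adj n) (p 0) (p 3)"
    unfolding P4_ends_def by blast
  moreover have "p 0 = i" using assms(2) unfolding p_def by simp
  ultimately show ?thesis unfolding p_def by simp
qed

lemma ei_coloring_odd_cycle_ge_3:
  assumes "odd n" "5 \<le> n" and f: "ei_coloring {0..<n} (cycle_adj n) k f"
  shows "3 \<le> k"
proof (rule ccontr)
  assume "\<not> 3 \<le> k"
  have two_colours: "f i = 1 \<or> f i = 2" if "i < n" for i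
  proof -
    have "f i \<in> {1..k}" using f that unfolding ei_coloring_def by simp
    then show ?thesis using \<open>\<not> 3 \<le> k\<close> by auto
  qed
  have "f i \<noteq> f ((i + 3) mod n)" if "i < n" for i
    using f P4_ends_cycle[of n i] that assms(2) unfolding ei_coloring_def by simp
  then have flip: "f ((i + 3) mod n) = 3 - f i" if "i < n" for i
    using two_colours[OF that] two_colours[of "(i + 3) mod n"] that by fastforce
  have "f (3 * j mod n) = (if even j then f 0 else 3 - f 0)" for j
  proof (induction j)
    case 0
    show ?case by simp
  next
    case (Suc j)
    have "3 * Suc j mod n = (3 * j mod n + 3) mod n"
      by (metis mod_add_left_eq mult_Suc_right add.commute)
    then have "f (3 * Suc j mod n) = 3 - f (3 * j mod n)"
      using flip[of "3 * j mod n"] assms(2) by simp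
    then show ?case using Suc.IH two_colours[of 0] assms(2) by auto
  qed
  from this[of n] have "f 0 = 3 - f 0" using assms(1) by simp
  then show False using two_colours[of 0] assms(2) by auto
qed

theorem proposition2p8:
  shows "(\<forall>(V :: 'a set) E. simple_graph V E \<longrightarrow>
            chi_ei V E \<le> max_degree V E * (max_degree V E - 1)^2 + 1)
       \<and> (\<forall>n::nat. odd n \<and> 5 \<le> n \<longrightarrow>
            chi_ei {0..<n} (cycle_adj n)
              = max_degree {0..<n} (cycle_adj n) * (max_degree {0..<n} (cycle_adj n) - 1)^2 + 1)"
proof (intro conjI allI impI)
  fix V :: "'a set" and E
  assume "simple_graph V E"
  then show "chi_ei V E \<le> max_degree V E * (max_degree V E - 1)^2 + 1"
    using ei_coloring_exists chi_ei_le by blast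
next
  fix n :: nat
  assume n: "odd n \<and> 5 \<le> n"
  then have \<Delta>: "max_degree {0..<n} (cycle_adj n) = 2"
    by (intro max_degree_cycle) simp
  have "\<exists>f. ei_coloring {0..<n} (cycle_adj n) 3 f"
    using ei_coloring_exists[OF simple_graph_cycle[of n]] n by (simp add: \<Delta>)
  then obtain f where f: "ei_coloring {0..<n} (cycle_adj n) 3 f" ..
  then obtain g where "ei_coloring {0..<n} (cycle_adj n) (chi_ei {0..<n} (cycle_adj n)) g"
    using ei_coloring_chi_ei by blast
  then have "3 \<le> chi_ei {0..<n} (cycle_adj n)"
    using ei_coloring_odd_cycle_ge_3 n by blast
  with chi_ei_le[OF f] show "chi_ei {0..<n} (cycle_adj n)
      = max_degree {0..<n} (cycle_adj n) * (max_degree {0..<n} (cycle_adj n) - 1)^2 + 1"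
    by (simp add: \<Delta>)
qed

end
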